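(* Let $\mathbf L=(L,\vee,\wedge,{}',0,1)$ be a bounded lattice with complementation $'$. Then the following are equivalent: (a) for all $x,y,z\in L$, $x\odot y\le z$ implies $x\le y\to z$; (b) $\mathbf L$ satisfies the identity $x\vee y'\approx y'\vee\big((x\vee y')\wedge y\big)$; (c) for all $x,y\in L$, $x'\le y$ implies $y=x'\vee(y\wedge x)$. Furthermore, the following are equivalent: (d) for all $x,y,z\in L$, $x\le y\to z$ implies $x\odot y\le z$; (e) $\mathbf L$ satisfies the identity $x\wedge y\approx x\wedge\big((x\wedge y)\vee x'\big)$; (f) for all $x,y\in L$, $x\le y$ implies $x=(y'\vee x)\wedge y$.
   Context: A complementation on a bounded lattice is a unary operation $'$ with $x\vee x'=1$ and $x\wedge x'=0$ for all $x$ (no involutivity or antitonicity is assumed). The Sasaki operations are $x\odot y=(x\vee y')\wedge y$ and $x\to y=x'\vee(x\wedge y)$. *)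

theory Defs
  imports Main
begin

definition complementation :: "('a::bounded_lattice \<Rightarrow> 'a) \<Rightarrow> bool" where
  "complementation c \<longleftrightarrow> (\<forall>x. sup x (c x) = top \<and> inf x (c x) = bot)"

definition sasaki_prod :: "('a::lattice \<Rightarrow> 'a) \<Rightarrow> 'a \<Rightarrow> 'a \<Rightarrow> 'a" where
  "sasaki_prod c x y = inf (sup x (c y)) y"

definition sasaki_imp :: "('a::lattice \<Rightarrow> 'a) \<Rightarrow> 'a \<Rightarrow> 'a \<Rightarrow> 'a" where
  "sasaki_imp c x y = sup (c x) (inf x y)"

end

theory Submission
  imports Defs
begin

text \<open>Identities (b) and (e) are the order conditions (c) and (f)
  restricted to the comparable pairs \<open>c y \<le> x \<squnion> c y\<close> and \<open>x \<sqinter> y \<le> x\<close>; (b) is (a)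
  with \<open>z\<close> chosen as the Sasaki product \<open>x \<odot> y\<close>, and (e) is (d) applied to
  \<open>x \<sqinter> (x \<rightarrow> x \<sqinter> y) \<le> x \<rightarrow> x \<sqinter> y\<close>.\<close>

lemma sasaki_prod_le_imp_iff_join_identity:
  fixes c :: "'a::lattice \<Rightarrow> 'a"
  shows "(\<forall>x y z. sasaki_prod c x y \<le> z \<longrightarrow> x \<le> sasaki_imp c y z)
     \<longleftrightarrow> (\<forall>x y. sup x (c y) = sup (c y) (inf (sup x (c y)) y))"
proof (intro iffI allI impI)
  fix x y :: 'a
  assume adj: "\<forall>x y z. sasaki_prod c x y \<le> z \<longrightarrow> x \<le> sasaki_imp c y z"
  have "x \<le> sasaki_imp c y (sasaki_prod c x y)"
    using adj by blast
  then have "x \<le> sup (c y) (inf (sup x (c y)) y)"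
    by (simp add: sasaki_imp_def sasaki_prod_def inf_commute)
  then show "sup x (c y) = sup (c y) (inf (sup x (c y)) y)"
    by (simp add: order_antisym le_supI2)
next
  fix x y z :: 'a
  assume ident: "\<forall>x y. sup x (c y) = sup (c y) (inf (sup x (c y)) y)"
    and "sasaki_prod c x y \<le> z"
  then have "inf (sup x (c y)) y \<le> inf y z"
    by (simp add: sasaki_prod_def)
  then have "sup (c y) (inf (sup x (c y)) y) \<le> sasaki_imp c y z"
    by (simp add: sasaki_imp_def sup.coboundedI2)
  then have "sup x (c y) \<le> sasaki_imp c y z"
    using ident by simp
  then show "x \<le> sasaki_imp c y z"
    by simp
qed

lemma join_identity_iff_orthomodular_join:
  fixes c :: "'a::lattice \<Rightarrow> 'a"
  shows "(\<forall>x y. sup x (c y) = sup (c y) (inf (sup x (c y)) y))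
     \<longleftrightarrow> (\<forall>x y. c x \<le> y \<longrightarrow> y = sup (c x) (inf y x))"
proof (intro iffI allI impI)
  fix x y :: 'a
  assume ident: "\<forall>x y. sup x (c y) = sup (c y) (inf (sup x (c y)) y)"
    and "c x \<le> y"
  then have "sup y (c x) = y"
    by (simp add: sup_absorb1)
  then show "y = sup (c x) (inf y x)"
    using ident by metis
next
  fix x y :: 'a
  assume "\<forall>x y. c x \<le> y \<longrightarrow> y = sup (c x) (inf y x)"
  then show "sup x (c y) = sup (c y) (inf (sup x (c y)) y)"
    by simp
qed

lemma sasaki_imp_le_prod_iff_meet_identity:
  fixes c :: "'a::lattice \<Rightarrow> 'a"
  shows "(\<forall>x y z. x \<le> sasaki_imp c y z \<longrightarrow> sasaki_prod c x y \<le> z)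
     \<longleftrightarrow> (\<forall>x y. inf x y = inf x (sup (inf x y) (c x)))"
proof (intro iffI allI)
  fix x y :: 'a
  assume adj: "\<forall>x y z. x \<le> sasaki_imp c y z \<longrightarrow> sasaki_prod c x y \<le> z"
  define w where "w = inf x (sup (inf x y) (c x))"
  have "w \<le> sasaki_imp c x (inf x y)"
    by (simp add: w_def sasaki_imp_def sup_commute le_infI2)
  then have "sasaki_prod c w x \<le> inf x y"
    using adj by blast
  moreover have "w \<le> sasaki_prod c w x"
    by (simp add: w_def sasaki_prod_def)
  ultimately have "w \<le> inf x y"
    by (rule order_trans[rotated])
  then show "inf x y = w"
    by (simp add: w_def order_antisym)
next
  fix x y z :: 'a
  assume ident: "\<forall>x y. inf x y = inf x (sup (inf x y) (c x))"
  show "x \<le> sasaki_imp c y z \<longrightarrow> sasaki_prod c x y \<le> z"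
  proof
    assume "x \<le> sasaki_imp c y z"
    then have "sasaki_prod c x y \<le> inf (sup (sup (c y) (inf y z)) (c y)) y"
      by (simp add: sasaki_prod_def sasaki_imp_def le_infI1 le_supI1)
    also have "\<dots> = inf y (sup (inf y z) (c y))"
      by (simp add: inf_commute sup_commute sup_left_commute)
    also have "\<dots> = inf y z"
      using ident by metis
    finally show "sasaki_prod c x y \<le> z"
      by simp
  qed
qed

lemma meet_identity_iff_orthomodular_meet:
  fixes c :: "'a::lattice \<Rightarrow> 'a"
  shows "(\<forall>x y. inf x y = inf x (sup (inf x y) (c x)))
     \<longleftrightarrow> (\<forall>x y. x \<le> y \<longrightarrow> x = inf (sup (c y) x) y)"
proof (intro iffI allI impI)
  fix x y :: 'a
  assume ident: "\<forall>x y. inf x y = inf x (sup (inf x y) (c x))"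
    and "x \<le> y"
  then have "inf y x = x"
    by (simp add: inf_absorb2)
  then show "x = inf (sup (c y) x) y"
    using ident by (metis inf_commute sup_commute)
next
  fix x y :: 'a
  assume "\<forall>x y. x \<le> y \<longrightarrow> x = inf (sup (c y) x) y"
  then have "inf x y = inf (sup (c x) (inf x y)) x"
    by simp
  then show "inf x y = inf x (sup (inf x y) (c x))"
    by (simp add: inf_commute sup_commute)
qed

theorem theorem1:
  fixes c :: "'a::bounded_lattice \<Rightarrow> 'a"
  assumes "complementation c"
  shows "((\<forall>x y z. sasaki_prod c x y \<le> z \<longrightarrow> x \<le> sasaki_imp c y z)
          \<longleftrightarrow> (\<forall>x y. sup x (c y) = sup (c y) (inf (sup x (c y)) y)))
       \<and> ((\<forall>x y. sup x (c y) = sup (c y) (inf (sup x (c y)) y))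
          \<longleftrightarrow> (\<forall>x y. c x \<le> y \<longrightarrow> y = sup (c x) (inf y x)))
       \<and> ((\<forall>x y z. x \<le> sasaki_imp c y z \<longrightarrow> sasaki_prod c x y \<le> z)
          \<longleftrightarrow> (\<forall>x y. inf x y = inf x (sup (inf x y) (c x))))
       \<and> ((\<forall>x y. inf x y = inf x (sup (inf x y) (c x)))
          \<longleftrightarrow> (\<forall>x y. x \<le> y \<longrightarrow> x = inf (sup (c y) x) y))"
  by (intro conjI sasaki_prod_le_imp_iff_join_identity join_identity_iff_orthomodular_join
      sasaki_imp_le_prod_iff_meet_identity meet_identity_iff_orthomodular_meet)

end
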